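(* Let $K$ be a finite ordered simplicial complex. Then there exists $C\in\mathbb{N}$ such that every crystalline subdivision $K_\ell$, $\ell\in\mathbb{N}$, of $K$ admits a coloring of size $C$.
   Context: A simplicial complex is a locally finite set of linear simplices in $\mathbb{R}^N$ closed under faces with pairwise intersections common faces; ordered means vertices totally ordered. $K_\ell$ is the $\ell$th crystalline subdivision: for an ordered $m$-simplex $\langle v_0,\dots,v_m\rangle$, $m>0$, let $\iota$ be the affine map into $[0,1]^m$ with $\iota(v_j)=(0,\dots,0,1,\dots,1)$ ($j$ zeros followed by $m-j$ ones); subdivide $[0,1]^m$ into $2^{\ell m}$ cubes of side $2^{-\ell}$, each into the $m!$ rescaled translates of $\{0\le x_{\pi(1)}\le\dots\le x_{\pi(m)}\le1\}$, and pull back via $\iota$; apply to all simplices of $K$. Two simplices are adjacent if they share a face; the star of a simplex is the set of simplices adjacent to it together with their faces. A coloring of size $C$ of a complex is a surjective map $c$ from its set of top-dimensional simplices to $\{0,\dots,C\}$ such that $c(\Delta)\neq c(\Delta')$ for distinct top simplices $\Delta,\Delta'$ whose stars intersect. *)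

theory Defs
  imports "HOL-Analysis.Analysis"
begin

text \<open>A (geometric) simplex in a Euclidean space is represented by its finite, nonempty,
  affinely independent vertex set; the simplex itself is its convex hull.\<close>

definition simplex_vs :: "'a::euclidean_space set \<Rightarrow> bool" where
  "simplex_vs S \<longleftrightarrow> finite S \<and> S \<noteq> {} \<and> \<not> affine_dependent S"

definition geom_simplicial_complex :: "'a::euclidean_space set set \<Rightarrow> bool" where
  "geom_simplicial_complex K \<longleftrightarrow>
     (\<forall>S\<in>K. simplex_vs S) \<and>
     (\<forall>S\<in>K. \<forall>T. T \<subseteq> S \<and> T \<noteq> {} \<longrightarrow> T \<in> K) \<and>
     (\<forall>S\<in>K. \<forall>T\<in>K. convex hull S \<inter> convex hull T = convex hull (S \<inter> T))"

definition ord_vertex :: "('a \<times> 'a) set \<Rightarrow> 'a set \<Rightarrow> nat \<Rightarrow> 'a" where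
  "ord_vertex r S j = (THE v. v \<in> S \<and> card {w \<in> S. (w, v) \<in> r \<and> w \<noteq> v} = j)"

text \<open>The inverse of the affine map iota: R^m -> aff(S) (coordinates x 1, ..., x m),
  sending (0,...,0,1,...,1) (j zeros, m-j ones) to the j-th vertex v_j.\<close>
definition iota_inv :: "('a \<times> 'a) set \<Rightarrow> 'a::euclidean_space set \<Rightarrow> (nat \<Rightarrow> real) \<Rightarrow> 'a" where
  "iota_inv r S x =
     (let m = card S - 1;
          x' = (\<lambda>i. if i = 0 then 0 else if i = m + 1 then 1 else x i)
      in \<Sum>j\<le>m. (x' (j + 1) - x' j) *\<^sub>R ord_vertex r S j)"

text \<open>Vertices of the small simplex of the l-th subdivision of [0,1]^m determined by the
  cube with lower corner k/2^l (k i < 2^l) and the permutation p of {1..m}: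
  the i-th vertex (i = 0..m) is  (k + sum_{j>i} e_(p j)) / 2^l.\<close>
definition cube_vertex :: "nat \<Rightarrow> nat \<Rightarrow> (nat \<Rightarrow> nat) \<Rightarrow> (nat \<Rightarrow> nat) \<Rightarrow> nat \<Rightarrow> (nat \<Rightarrow> real)" where
  "cube_vertex l m k p i =
     (\<lambda>t. (real (k t) + (if t \<in> p ` {i+1..m} then 1 else 0)) / 2 ^ l)"

text \<open>The top-dimensional pieces into which the l-th crystalline subdivision cuts the
  ordered simplex S (for a vertex, S itself): pullbacks under iota of those small simplices
  of [0,1]^m that lie in iota(S) = {0 \<le> x_1 \<le> ... \<le> x_m \<le> 1}.\<close>
definition crystal_pieces :: "('a \<times> 'a) set \<Rightarrow> nat \<Rightarrow> 'a::euclidean_space set \<Rightarrow> 'a set set" where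
  "crystal_pieces r l S =
     (let m = card S - 1 in
      if m = 0 then {S}
      else {iota_inv r S ` {cube_vertex l m k p i | i. i \<le> m} | k p.
              (\<forall>t\<in>{1..m}. k t < 2 ^ l) \<and> p permutes {1..m} \<and>
              (\<forall>i\<le>m. \<forall>s t. 1 \<le> s \<and> s \<le> t \<and> t \<le> m \<longrightarrow>
                  cube_vertex l m k p i s \<le> cube_vertex l m k p i t)})"

definition crystalline :: "('a \<times> 'a) set \<Rightarrow> 'a::euclidean_space set set \<Rightarrow> nat \<Rightarrow> 'a set set" where
  "crystalline r K l = {T. T \<noteq> {} \<and> (\<exists>S\<in>K. \<exists>U\<in>crystal_pieces r l S. T \<subseteq> U)}"

definition top_simplices :: "'a set set \<Rightarrow> 'a set set" where
  "top_simplices L = {T \<in> L. card T = Max (card ` L)}"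

definition star :: "'a set set \<Rightarrow> 'a set \<Rightarrow> 'a set set" where
  "star L T = {U \<in> L. \<exists>V\<in>L. V \<inter> T \<noteq> {} \<and> U \<subseteq> V}"

definition is_coloring :: "'a set set \<Rightarrow> ('a set \<Rightarrow> nat) \<Rightarrow> nat \<Rightarrow> bool" where
  "is_coloring L c C \<longleftrightarrow>
     c ` top_simplices L = {0..C} \<and>
     (\<forall>D\<in>top_simplices L. \<forall>D'\<in>top_simplices L.
        D \<noteq> D' \<and> star L D \<inter> star L D' \<noteq> {} \<longrightarrow> c D \<noteq> c D')"

end

(*
  Pieces have at most dim K + 1 vertices, and, independently of l, a point lies in at most
  3^m m! pieces of an m-simplex S: since iota is injective, a vertex of a piece determines the
  lattice corner k of its cube up to +-1 in each coordinate, and the piece inside the cube is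
  given by a permutation of {1..m}. Hence for a top simplex D, the simplices whose stars meet
  the star of D lie in pieces meeting the second neighbourhood of D, so there are boundedly many
  of them, and a greedy colouring of this conflict graph needs a number of colours independent
  of l.
*)
theory Submission
  imports Defs
begin

lemma greedy_coloring:
  fixes R :: "'b \<Rightarrow> 'b \<Rightarrow> bool"
  assumes "finite A" and sym: "\<And>x y. R x y \<Longrightarrow> R y x"
    and "\<And>x. x \<in> A \<Longrightarrow> card {y\<in>A. y \<noteq> x \<and> R x y} \<le> B"
  shows "\<exists>c. (\<forall>x\<in>A. c x \<le> B) \<and> (\<forall>x\<in>A. \<forall>y\<in>A. x \<noteq> y \<and> R x y \<longrightarrow> c x \<noteq> c y)"
  using assms(1,3)
proof (induction A rule: finite_induct)
  case empty
  show ?case by simp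
next
  case (insert x F)
  have bound_F: "card {y\<in>F. y \<noteq> z \<and> R z y} \<le> B" if "z \<in> F" for z
  proof -
    have "card {y\<in>F. y \<noteq> z \<and> R z y} \<le> card {y\<in>insert x F. y \<noteq> z \<and> R z y}"
      using insert.hyps(1) by (intro card_mono) auto
    also have "\<dots> \<le> B"
      using insert.prems that by simp
    finally show ?thesis .
  qed
  obtain c where c_le: "\<forall>y\<in>F. c y \<le> B"
    and c_proper: "\<forall>y\<in>F. \<forall>z\<in>F. y \<noteq> z \<and> R y z \<longrightarrow> c y \<noteq> c z"
    using insert.IH[OF bound_F] by auto
  define N where "N = {y\<in>F. R x y}"
  have "card (c ` N) \<le> card N"
    using insert.hyps(1) by (intro card_image_le) (simp add: N_def)
  also have "card N \<le> card {y\<in>insert x F. y \<noteq> x \<and> R x y}"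
    using insert.hyps by (intro card_mono) (auto simp: N_def)
  also have "\<dots> \<le> B"
    using insert.prems by simp
  finally have "\<not> {0..B} \<subseteq> c ` N"
    using card_mono[of "c ` N" "{0..B}"] insert.hyps(1) by (auto simp: N_def)
  then obtain n where "n \<le> B" "n \<notin> c ` N"
    by (auto simp: subset_eq)
  then show ?case
    using c_le c_proper insert.hyps(2) sym
    by (intro exI[of _ "c(x := n)"]) (auto simp: N_def)
qed

lemma bounded_degree_coloring_onto:
  fixes R :: "'b \<Rightarrow> 'b \<Rightarrow> bool"
  assumes "finite A" and "A \<noteq> {}" and "\<And>x y. R x y \<Longrightarrow> R y x"
    and "\<And>x. x \<in> A \<Longrightarrow> card {y\<in>A. y \<noteq> x \<and> R x y} \<le> B"
  shows "\<exists>C\<le>B. \<exists>c. c ` A = {0..C} \<and> (\<forall>x\<in>A. \<forall>y\<in>A. x \<noteq> y \<and> R x y \<longrightarrow> c x \<noteq> c y)"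
proof -
  obtain c where c_le: "\<forall>x\<in>A. c x \<le> B"
    and c_proper: "\<forall>x\<in>A. \<forall>y\<in>A. x \<noteq> y \<and> R x y \<longrightarrow> c x \<noteq> c y"
    using greedy_coloring[OF assms(1,3,4)] by auto
  define C where "C = card (c ` A) - 1"
  have "card (c ` A) = card {0..C}"
    using assms(1,2) by (simp add: C_def card_gt_0_iff)
  then obtain h where h: "bij_betw h (c ` A) {0..C}"
    by (metis assms(1) finite_imageI finite_atLeastAtMost finite_same_card_bij)
  have "card (c ` A) \<le> card {0..B}"
    using c_le by (intro card_mono) auto
  then have "C \<le> B"
    by (simp add: C_def)
  moreover have "(h \<circ> c) ` A = {0..C}"
    using h by (simp add: bij_betw_def image_comp)
  moreover have "\<forall>x\<in>A. \<forall>y\<in>A. x \<noteq> y \<and> R x y \<longrightarrow> (h \<circ> c) x \<noteq> (h \<circ> c) y"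
    using c_proper h by (auto simp: bij_betw_def inj_on_def)
  ultimately show ?thesis
    by blast
qed

definition face_closure :: "'b set set \<Rightarrow> 'b set set" where
  "face_closure P = {T. T \<noteq> {} \<and> (\<exists>U\<in>P. T \<subseteq> U)}"

definition nbhd :: "'b set set \<Rightarrow> 'b set \<Rightarrow> 'b set" where
  "nbhd P X = \<Union>{U\<in>P. U \<inter> X \<noteq> {}}"

lemma card_Union_le_mult:
  assumes "\<And>A. A \<in> F \<Longrightarrow> card A \<le> k"
  shows "card (\<Union>F) \<le> card F * k"
  using card_Union_le_sum_card[of F] sum_bounded_above[of F card k] assms by simp

locale bounded_family =
  fixes P :: "'b set set" and a b :: nat
  assumes finite_family: "finite P"
    and finite_member: "U \<in> P \<Longrightarrow> finite U"
    and card_member_le: "U \<in> P \<Longrightarrow> card U \<le> a"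
    and card_containing_le: "card {U\<in>P. q \<in> U} \<le> b"
begin

lemma card_meeting_le:
  assumes "finite X"
  shows "card {U\<in>P. U \<inter> X \<noteq> {}} \<le> card X * b"
proof -
  have "{U\<in>P. U \<inter> X \<noteq> {}} = (\<Union>q\<in>X. {U\<in>P. q \<in> U})"
    by blast
  then have "card {U\<in>P. U \<inter> X \<noteq> {}} \<le> (\<Sum>q\<in>X. card {U\<in>P. q \<in> U})"
    using card_UN_le[OF assms] by simp
  also have "\<dots> \<le> card X * b"
    using sum_bounded_above[of X _ b] card_containing_le by simp
  finally show ?thesis .
qed

lemma finite_nbhd: "finite (nbhd P X)"
  using finite_family finite_member by (auto simp: nbhd_def)

lemma card_nbhd_le:
  assumes "finite X"
  shows "card (nbhd P X) \<le> card X * b * a"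
proof -
  have "card (nbhd P X) \<le> card {U\<in>P. U \<inter> X \<noteq> {}} * a"
    unfolding nbhd_def using card_member_le by (intro card_Union_le_mult) auto
  also have "\<dots> \<le> card X * b * a"
    using card_meeting_le[OF assms] by simp
  finally show ?thesis .
qed

lemma card_subsets_of_members_meeting_le:
  assumes "finite X"
  shows "card (\<Union>(Pow ` {W\<in>P. W \<inter> X \<noteq> {}})) \<le> card X * b * 2 ^ a"
proof -
  have "card (\<Union>(Pow ` {W\<in>P. W \<inter> X \<noteq> {}})) \<le> card (Pow ` {W\<in>P. W \<inter> X \<noteq> {}}) * 2 ^ a"
    using finite_member card_member_le
    by (intro card_Union_le_mult) (auto simp: card_Pow power_increasing)
  also have "\<dots> \<le> card {W\<in>P. W \<inter> X \<noteq> {}} * 2 ^ a"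
    using finite_family by (simp add: card_image_le)
  also have "\<dots> \<le> card X * b * 2 ^ a"
    using card_meeting_le[OF assms] by simp
  finally show ?thesis .
qed

lemma finite_face_closure: "finite (face_closure P)"
proof (rule finite_subset)
  show "face_closure P \<subseteq> \<Union>(Pow ` P)"
    by (auto simp: face_closure_def)
  show "finite (\<Union>(Pow ` P))"
    using finite_family finite_member by simp
qed

lemma star_conflict_in_member_meeting_nbhd:
  assumes "D' \<in> face_closure P"
    and "star (face_closure P) D \<inter> star (face_closure P) D' \<noteq> {}"
  shows "\<exists>W\<in>P. W \<inter> nbhd P (nbhd P D) \<noteq> {} \<and> D' \<subseteq> W"
proof -
  obtain U V V' where "U \<in> face_closure P" "U \<subseteq> V" "U \<subseteq> V'"
    and V: "V \<in> face_closure P" "V \<inter> D \<noteq> {}"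
    and V': "V' \<in> face_closure P" "V' \<inter> D' \<noteq> {}"
    using assms(2) unfolding star_def by auto
  then obtain u where "u \<in> V" "u \<in> V'"
    unfolding face_closure_def by auto
  obtain W0 W1 W where "W0 \<in> P" "V \<subseteq> W0" "W1 \<in> P" "V' \<subseteq> W1" "W \<in> P" "D' \<subseteq> W"
    using V(1) V'(1) assms(1) unfolding face_closure_def by auto
  with \<open>u \<in> V\<close> V(2) have "u \<in> nbhd P D"
    unfolding nbhd_def by blast
  with \<open>u \<in> V'\<close> \<open>W1 \<in> P\<close> \<open>V' \<subseteq> W1\<close> have "V' \<subseteq> nbhd P (nbhd P D)"
    unfolding nbhd_def by blast
  with V'(2) \<open>W \<in> P\<close> \<open>D' \<subseteq> W\<close> show ?thesis
    by auto
qed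

lemma card_star_conflicts_le:
  assumes "D \<in> face_closure P"
  shows "card {D'\<in>face_closure P. star (face_closure P) D \<inter> star (face_closure P) D' \<noteq> {}}
    \<le> a ^ 3 * b ^ 3 * 2 ^ a"
proof -
  define N where "N = nbhd P (nbhd P D)"
  obtain U where "U \<in> P" "D \<subseteq> U"
    using assms by (auto simp: face_closure_def)
  then have "finite D" "card D \<le> a"
    using finite_member card_member_le card_mono[of U D] finite_subset by fastforce+
  have "card N \<le> card (nbhd P D) * b * a"
    unfolding N_def by (rule card_nbhd_le[OF finite_nbhd])
  also have "\<dots> \<le> card D * b * a * b * a"
    using card_nbhd_le[OF \<open>finite D\<close>] by (intro mult_right_mono) auto
  also have "\<dots> \<le> a * b * a * b * a"
    using \<open>card D \<le> a\<close> by (intro mult_right_mono) auto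
  finally have card_N: "card N \<le> a * b * a * b * a" .
  have "{D'\<in>face_closure P. star (face_closure P) D \<inter> star (face_closure P) D' \<noteq> {}}
      \<subseteq> \<Union>(Pow ` {W\<in>P. W \<inter> N \<noteq> {}})"
    using star_conflict_in_member_meeting_nbhd by (fastforce simp: N_def)
  moreover have "card (\<Union>(Pow ` {W\<in>P. W \<inter> N \<noteq> {}})) \<le> card N * b * 2 ^ a"
    unfolding N_def by (rule card_subsets_of_members_meeting_le[OF finite_nbhd])
  moreover have "finite (\<Union>(Pow ` {W\<in>P. W \<inter> N \<noteq> {}}))"
    using finite_family finite_member by simp
  ultimately have "card {D'\<in>face_closure P. star (face_closure P) D \<inter> star (face_closure P) D' \<noteq> {}}
      \<le> card N * b * 2 ^ a"
    by (meson card_mono le_trans)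
  also have "\<dots> \<le> a ^ 3 * b ^ 3 * 2 ^ a"
    using card_N by (simp add: power3_eq_cube mult.commute mult.left_commute)
  finally show ?thesis .
qed

lemma face_closure_coloring:
  assumes "\<exists>U\<in>P. U \<noteq> {}"
  shows "\<exists>C\<le>a ^ 3 * b ^ 3 * 2 ^ a. \<exists>c. is_coloring (face_closure P) c C"
proof -
  let ?L = "face_closure P"
  let ?T = "top_simplices ?L"
  let ?R = "\<lambda>D D'. star ?L D \<inter> star ?L D' \<noteq> {}"
  have "?L \<noteq> {}"
    using assms by (auto simp: face_closure_def)
  then have "Max (card ` ?L) \<in> card ` ?L"
    using finite_face_closure by simp
  then have T_ne: "?T \<noteq> {}"
    by (auto simp: top_simplices_def)
  have T_fin: "finite ?T"
    using finite_face_closure by (simp add: top_simplices_def)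
  have R_sym: "?R D D' \<Longrightarrow> ?R D' D" for D D'
    by (simp add: Int_commute)
  have degree: "card {D'\<in>?T. D' \<noteq> D \<and> ?R D D'} \<le> a ^ 3 * b ^ 3 * 2 ^ a" if "D \<in> ?T" for D
  proof -
    have "card {D'\<in>?T. D' \<noteq> D \<and> ?R D D'} \<le> card {D'\<in>?L. ?R D D'}"
      using finite_face_closure by (intro card_mono) (auto simp: top_simplices_def)
    also have "\<dots> \<le> a ^ 3 * b ^ 3 * 2 ^ a"
      using that by (intro card_star_conflicts_le) (simp add: top_simplices_def)
    finally show ?thesis .
  qed
  obtain C c where "C \<le> a ^ 3 * b ^ 3 * 2 ^ a" "c ` ?T = {0..C}"
    "\<forall>D\<in>?T. \<forall>D'\<in>?T. D \<noteq> D' \<and> ?R D D' \<longrightarrow> c D \<noteq> c D'"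
    using bounded_degree_coloring_onto[OF T_fin T_ne R_sym degree] by auto
  then show ?thesis
    unfolding is_coloring_def by auto
qed

end

lemma bij_betw_ord_vertex:
  assumes "linear_order_on X r" and "S \<subseteq> X" and "finite S"
  shows "bij_betw (ord_vertex r S) {..<card S} S"
proof -
  define rank where "rank w = card {w'\<in>S. (w', w) \<in> r \<and> w' \<noteq> w}" for w
  have "trans r" "antisym r" "total_on X r"
    using assms(1) by (simp_all add: linear_order_on_def partial_order_on_def preorder_on_def)
  have rank_less: "rank v < rank w" if "v \<in> S" "v \<noteq> w" "(v, w) \<in> r" for v w
  proof -
    have "{w'\<in>S. (w', v) \<in> r \<and> w' \<noteq> v} \<subseteq> {w'\<in>S. (w', w) \<in> r \<and> w' \<noteq> w}"
      using that \<open>trans r\<close> \<open>antisym r\<close> by (auto dest: transD antisymD)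
    moreover have "v \<in> {w'\<in>S. (w', w) \<in> r \<and> w' \<noteq> w} - {w'\<in>S. (w', v) \<in> r \<and> w' \<noteq> v}"
      using that by simp
    ultimately show ?thesis
      unfolding rank_def using assms(3) by (intro psubset_card_mono) auto
  qed
  have rank_inj: "inj_on rank S"
  proof (rule inj_onI, rule ccontr)
    fix v w assume "v \<in> S" "w \<in> S" "rank v = rank w" "v \<noteq> w"
    then show False
      using \<open>total_on X r\<close> assms(2) rank_less[of v w] rank_less[of w v]
      by (auto simp: total_on_def)
  qed
  moreover have "rank ` S = {..<card S}"
  proof (rule card_subset_eq)
    show "rank ` S \<subseteq> {..<card S}"
      unfolding rank_def using assms(3) by (auto intro!: psubset_card_mono)
    show "card (rank ` S) = card {..<card S}"
      using card_image[OF rank_inj] by simp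
  qed simp
  ultimately have "bij_betw rank S {..<card S}"
    by (simp add: bij_betw_def)
  moreover have "ord_vertex r S = the_inv_into S rank"
    by (simp add: fun_eq_iff ord_vertex_def the_inv_into_def rank_def)
  ultimately show ?thesis
    by (simp add: bij_betw_the_inv_into)
qed

lemma affine_independent_coeffs_unique:
  fixes v :: "'i \<Rightarrow> 'a::real_vector"
  assumes "\<not> affine_dependent S" and "bij_betw v I S" and "finite I"
    and "(\<Sum>j\<in>I. u j) = (\<Sum>j\<in>I. u' j)"
    and "(\<Sum>j\<in>I. u j *\<^sub>R v j) = (\<Sum>j\<in>I. u' j *\<^sub>R v j)"
    and "i \<in> I"
  shows "u i = u' i"
proof -
  define U where "U w = u (inv_into I v w) - u' (inv_into I v w)" for w
  have U_v: "U (v j) = u j - u' j" if "j \<in> I" for j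
    using assms(2) that by (simp add: U_def bij_betw_def)
  have "sum U S = (\<Sum>j\<in>I. u j - u' j)"
    using sum.reindex_bij_betw[OF assms(2), of U] U_v by simp
  also have "\<dots> = 0"
    using assms(4) by (simp add: sum_subtractf)
  finally have "sum U S = 0" .
  have "(\<Sum>w\<in>S. U w *\<^sub>R w) = (\<Sum>j\<in>I. (u j - u' j) *\<^sub>R v j)"
    using sum.reindex_bij_betw[OF assms(2), of "\<lambda>w. U w *\<^sub>R w"] U_v by simp
  also have "\<dots> = 0"
    using assms(5) by (simp add: scaleR_left_diff_distrib sum_subtractf)
  finally have "(\<Sum>w\<in>S. U w *\<^sub>R w) = 0" .
  moreover have "finite S"
    using assms(2,3) bij_betw_finite by blast
  ultimately have "\<forall>w\<in>S. U w = 0"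
    using assms(1) \<open>sum U S = 0\<close> affine_dependent_explicit_finite by blast
  then show ?thesis
    using U_v[OF assms(6)] bij_betwE[OF assms(2)] assms(6) by force
qed

definition pad_coords :: "nat \<Rightarrow> (nat \<Rightarrow> real) \<Rightarrow> nat \<Rightarrow> real" where
  "pad_coords m x i = (if i = 0 then 0 else if i = m + 1 then 1 else x i)"

lemma iota_inv_pad_coords:
  "iota_inv r S x = (\<Sum>j\<le>card S - 1.
     (pad_coords (card S - 1) x (Suc j) - pad_coords (card S - 1) x j) *\<^sub>R ord_vertex r S j)"
  by (simp add: iota_inv_def pad_coords_def Let_def)

lemma iota_inv_cong:
  assumes "\<And>t. t \<in> {1..card S - 1} \<Longrightarrow> x t = y t"
  shows "iota_inv r S x = iota_inv r S y"
proof -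
  have "pad_coords (card S - 1) x j = pad_coords (card S - 1) y j" if "j \<le> card S - 1 + 1" for j
    unfolding pad_coords_def using assms[of j] that by auto
  then show ?thesis
    unfolding iota_inv_pad_coords by (intro sum.cong) auto
qed

lemma iota_inv_eqD:
  assumes "simplex_vs S" and "linear_order_on X r" and "S \<subseteq> X"
    and "iota_inv r S x = iota_inv r S y" and "t \<in> {1..card S - 1}"
  shows "x t = y t"
proof -
  define m where "m = card S - 1"
  have "finite S" "\<not> affine_dependent S" and card_S: "card S = Suc m"
    using assms(1) by (auto simp: simplex_vs_def m_def card_gt_0_iff)
  then have bij: "bij_betw (ord_vertex r S) {..m} S"
    using bij_betw_ord_vertex[OF assms(2,3)] by (simp add: lessThan_Suc_atMost)
  \<comment> \<open>the barycentric coordinates of iota_inv; x is recovered from them by telescoping\<close>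
  define u where "u z j = pad_coords m z (Suc j) - pad_coords m z j" for z j
  have telescope: "(\<Sum>j<k. u z j) = pad_coords m z k" for z k
    unfolding u_def sum_lessThan_telescope by (simp add: pad_coords_def)
  have "(\<Sum>j\<le>m. u x j) = (\<Sum>j\<le>m. u y j)"
    using telescope[where k = "Suc m"] by (simp add: lessThan_Suc_atMost pad_coords_def)
  moreover have "(\<Sum>j\<le>m. u x j *\<^sub>R ord_vertex r S j) = (\<Sum>j\<le>m. u y j *\<^sub>R ord_vertex r S j)"
    using assms(4) by (simp add: iota_inv_pad_coords u_def m_def)
  ultimately have "u x j = u y j" if "j \<le> m" for j
    using affine_independent_coeffs_unique[OF \<open>\<not> affine_dependent S\<close> bij] that by simp
  then have "pad_coords m x t = pad_coords m y t"
    using assms(5) telescope[of x t] telescope[of y t] by (simp add: m_def)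
  then show ?thesis
    using assms(5) by (simp add: pad_coords_def m_def)
qed

definition cube_simplex ::
    "('a \<times> 'a) set \<Rightarrow> 'a::euclidean_space set \<Rightarrow> nat \<Rightarrow> nat \<Rightarrow> (nat \<Rightarrow> nat) \<Rightarrow> (nat \<Rightarrow> nat) \<Rightarrow> 'a set"
  where "cube_simplex r S l m k p = iota_inv r S ` cube_vertex l m k p ` {..m}"

definition admissible_cube_simplex :: "nat \<Rightarrow> nat \<Rightarrow> (nat \<Rightarrow> nat) \<Rightarrow> (nat \<Rightarrow> nat) \<Rightarrow> bool" where
  "admissible_cube_simplex l m k p \<longleftrightarrow>
     (\<forall>t\<in>{1..m}. k t < 2 ^ l) \<and> p permutes {1..m} \<and>
     (\<forall>i\<le>m. \<forall>s t. 1 \<le> s \<and> s \<le> t \<and> t \<le> m \<longrightarrow> cube_vertex l m k p i s \<le> cube_vertex l m k p i t)"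

lemma crystal_pieces_eq:
  assumes "card S = Suc m" and "m \<noteq> 0"
  shows "crystal_pieces r l S = {cube_simplex r S l m k p | k p. admissible_cube_simplex l m k p}"
proof -
  have "{cube_vertex l m k p i | i. i \<le> m} = cube_vertex l m k p ` {..m}" for k p
    by auto
  then show ?thesis
    using assms by (simp add: crystal_pieces_def cube_simplex_def admissible_cube_simplex_def)
qed

lemma cube_simplex_restrict:
  assumes "card S = Suc m"
  shows "cube_simplex r S l m (restrict k {1..m}) p = cube_simplex r S l m k p"
proof -
  have "iota_inv r S (cube_vertex l m (restrict k {1..m}) p i) = iota_inv r S (cube_vertex l m k p i)" for i
    using assms by (intro iota_inv_cong) (simp add: cube_vertex_def)
  then show ?thesis
    by (simp add: cube_simplex_def image_image)
qed

lemma card_cube_simplices_le: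
  assumes "card S = Suc m" and "\<And>t. t \<in> {1..m} \<Longrightarrow> finite (A t) \<and> card (A t) \<le> n" and "1 \<le> n"
  shows "finite {cube_simplex r S l m k p | k p.
            admissible_cube_simplex l m k p \<and> (\<forall>t\<in>{1..m}. k t \<in> A t)}" (is "finite ?F")
    and "card {cube_simplex r S l m k p | k p.
            admissible_cube_simplex l m k p \<and> (\<forall>t\<in>{1..m}. k t \<in> A t)} \<le> n ^ m * fact m"
proof -
  let ?G = "(\<Pi>\<^sub>E t\<in>{1..m}. A t) \<times> {p. p permutes {1..m}}"
  have F_sub: "?F \<subseteq> (\<lambda>(k, p). cube_simplex r S l m k p) ` ?G"
  proof
    fix U assume "U \<in> ?F"
    then obtain k p where "U = cube_simplex r S l m (restrict k {1..m}) p"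
      "admissible_cube_simplex l m k p" "\<forall>t\<in>{1..m}. k t \<in> A t"
      using cube_simplex_restrict[OF assms(1)] by auto
    then show "U \<in> (\<lambda>(k, p). cube_simplex r S l m k p) ` ?G"
      by (auto simp: admissible_cube_simplex_def intro!: image_eqI[of _ _ "(restrict k {1..m}, p)"])
  qed
  moreover have "finite ?G"
    using assms(2) by (intro finite_cartesian_product finite_PiE finite_permutations) auto
  ultimately show "finite ?F"
    using finite_subset by blast
  have "card (\<Pi>\<^sub>E t\<in>{1..m}. A t) = (\<Prod>t\<in>{1..m}. card (A t))"
    by (simp add: card_PiE)
  also have "\<dots> \<le> n ^ m"
    using assms(2,3) by (intro prod_le_power) auto
  finally have "card ?G \<le> n ^ m * fact m"
    by (simp add: card_cartesian_product card_permutations)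
  moreover have "card ?F \<le> card ((\<lambda>(k, p). cube_simplex r S l m k p) ` ?G)"
    using F_sub \<open>finite ?G\<close> by (intro card_mono) auto
  moreover have "card ((\<lambda>(k, p). cube_simplex r S l m k p) ` ?G) \<le> card ?G"
    using \<open>finite ?G\<close> by (rule card_image_le)
  ultimately show "card ?F \<le> n ^ m * fact m"
    by simp
qed

lemma cube_vertex_eq_imp_near:
  assumes "cube_vertex l m k p i t = cube_vertex l m k' p' i' t"
  shows "k t \<in> {k' t - 1, k' t, k' t + 1}"
proof -
  have "real (k t) \<le> real (k' t) + 1" "real (k' t) \<le> real (k t) + 1"
    using assms by (auto simp: cube_vertex_def divide_cancel_right split: if_splits)
  then show ?thesis
    by auto
qed

lemma finite_crystal_pieces: "finite (crystal_pieces r l S)"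
proof (cases "card S - 1 = 0")
  case True
  then show ?thesis
    by (simp add: crystal_pieces_def)
next
  case False
  then have card_S: "card S = Suc (card S - 1)"
    by simp
  have "crystal_pieces r l S = {cube_simplex r S l (card S - 1) k p | k p.
      admissible_cube_simplex l (card S - 1) k p \<and> (\<forall>t\<in>{1..card S - 1}. k t \<in> {..<2 ^ l})}"
    unfolding crystal_pieces_eq[OF card_S False] admissible_cube_simplex_def by auto
  then show ?thesis
    using card_cube_simplices_le(1)[OF card_S, of "\<lambda>_. {..<2 ^ l}" "2 ^ l"] by simp
qed

lemma card_crystal_piece_le:
  assumes "finite S" and "U \<in> crystal_pieces r l S"
  shows "finite U" and "card U \<le> card S"
proof -
  have "finite U \<and> card U \<le> card S"
  proof (cases "card S - 1 = 0")
    case True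
    then show ?thesis
      using assms by (simp add: crystal_pieces_def)
  next
    case False
    then obtain k p where "U = cube_simplex r S l (card S - 1) k p"
      using assms(2) crystal_pieces_eq[of S "card S - 1"] by auto
    then show ?thesis
      using False card_image_le[of "{..card S - 1}" "iota_inv r S \<circ> cube_vertex l (card S - 1) k p"]
      by (simp add: cube_simplex_def image_comp)
  qed
  then show "finite U" "card U \<le> card S"
    by simp_all
qed

lemma crystal_pieces_nonempty:
  assumes "S \<noteq> {}"
  shows "\<exists>U\<in>crystal_pieces r l S. U \<noteq> {}"
proof (cases "card S - 1 = 0")
  case True
  then show ?thesis
    using assms by (simp add: crystal_pieces_def)
next
  case False
  have "admissible_cube_simplex l (card S - 1) (\<lambda>_. 0) id"
    by (simp add: admissible_cube_simplex_def cube_vertex_def permutes_id)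
  then have "cube_simplex r S l (card S - 1) (\<lambda>_. 0) id \<in> crystal_pieces r l S"
    using crystal_pieces_eq[of S "card S - 1"] False by auto
  moreover have "cube_simplex r S l (card S - 1) (\<lambda>_. 0) id \<noteq> {}"
    by (auto simp: cube_simplex_def)
  ultimately show ?thesis
    by auto
qed

lemma crystal_pieces_containing_subset:
  assumes "simplex_vs S" and "linear_order_on X r" and "S \<subseteq> X"
    and "card S = Suc m" and "m \<noteq> 0" and q: "q = iota_inv r S (cube_vertex l m k0 p0 i0)"
  shows "{U\<in>crystal_pieces r l S. q \<in> U} \<subseteq> {cube_simplex r S l m k p | k p.
    admissible_cube_simplex l m k p \<and> (\<forall>t\<in>{1..m}. k t \<in> {k0 t - 1, k0 t, k0 t + 1})}"
proof
  fix U assume "U \<in> {U\<in>crystal_pieces r l S. q \<in> U}"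
  then obtain k p i where U: "U = cube_simplex r S l m k p" "admissible_cube_simplex l m k p"
    and "q = iota_inv r S (cube_vertex l m k p i)"
    using crystal_pieces_eq[OF assms(4,5)] by (auto simp: cube_simplex_def)
  then have "cube_vertex l m k p i t = cube_vertex l m k0 p0 i0 t" if "t \<in> {1..m}" for t
    using iota_inv_eqD[OF assms(1-3)] q that assms(4) by simp
  then show "U \<in> {cube_simplex r S l m k p | k p.
      admissible_cube_simplex l m k p \<and> (\<forall>t\<in>{1..m}. k t \<in> {k0 t - 1, k0 t, k0 t + 1})}"
    using U cube_vertex_eq_imp_near by blast
qed

lemma card_crystal_pieces_containing_le:
  assumes "simplex_vs S" and "linear_order_on X r" and "S \<subseteq> X"
  shows "card {U\<in>crystal_pieces r l S. q \<in> U} \<le> 3 ^ (card S - 1) * fact (card S - 1)"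
proof (cases "card S - 1 = 0")
  case True
  then have "{U\<in>crystal_pieces r l S. q \<in> U} \<subseteq> {S}"
    by (auto simp: crystal_pieces_def)
  then show ?thesis
    using True card_mono[of "{S}"] by fastforce
next
  case False
  define m where "m = card S - 1"
  have card_S: "card S = Suc m" and "m \<noteq> 0"
    using False by (simp_all add: m_def)
  show ?thesis
  proof (cases "\<exists>U\<in>crystal_pieces r l S. q \<in> U")
    case False
    then have "{U\<in>crystal_pieces r l S. q \<in> U} = {}"
      by auto
    then show ?thesis
      by (simp only: card.empty le0)
  next
    case True
    then obtain k0 p0 i0 where q: "q = iota_inv r S (cube_vertex l m k0 p0 i0)"
      using crystal_pieces_eq[OF card_S \<open>m \<noteq> 0\<close>] by (auto simp: cube_simplex_def)
    let ?A = "\<lambda>t. {k0 t - 1, k0 t, k0 t + 1}"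
    have three: "finite (?A t) \<and> card (?A t) \<le> 3" for t
      by (simp add: card_insert_if)
    have "card {U\<in>crystal_pieces r l S. q \<in> U} \<le> card {cube_simplex r S l m k p | k p.
        admissible_cube_simplex l m k p \<and> (\<forall>t\<in>{1..m}. k t \<in> ?A t)}"
      using crystal_pieces_containing_subset[OF assms card_S \<open>m \<noteq> 0\<close> q]
        card_cube_simplices_le(1)[OF card_S, of ?A 3 r l] three
      by (simp add: card_mono)
    also have "\<dots> \<le> 3 ^ m * fact m"
      using card_cube_simplices_le(2)[OF card_S, of ?A 3 r l] three by simp
    finally show ?thesis
      by (simp add: m_def)
  qed
qed

lemma crystalline_eq_face_closure: "crystalline r K l = face_closure (\<Union>S\<in>K. crystal_pieces r l S)"
  by (auto simp: crystalline_def face_closure_def)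

lemma bounded_family_crystal_pieces:
  assumes "geom_simplicial_complex K" and "finite K" and "linear_order_on (\<Union>K) r"
  shows "bounded_family (\<Union>S\<in>K. crystal_pieces r l S) (Max (card ` K))
    (\<Sum>S\<in>K. 3 ^ (card S - 1) * fact (card S - 1))"
proof -
  have simplex: "simplex_vs S" if "S \<in> K" for S
    using assms(1) that by (simp add: geom_simplicial_complex_def)
  show ?thesis
  proof
    show "finite (\<Union>S\<in>K. crystal_pieces r l S)"
      using assms(2) by (intro finite_UN_I finite_crystal_pieces)
  next
    fix U assume "U \<in> (\<Union>S\<in>K. crystal_pieces r l S)"
    then obtain S where "S \<in> K" "U \<in> crystal_pieces r l S"
      by auto
    moreover have "finite S"
      using simplex \<open>S \<in> K\<close> by (simp add: simplex_vs_def)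
    ultimately have "finite U" "card U \<le> card S"
      using card_crystal_piece_le by blast+
    moreover have "card S \<le> Max (card ` K)"
      using assms(2) \<open>S \<in> K\<close> by simp
    ultimately show "finite U" and "card U \<le> Max (card ` K)"
      by simp_all
  next
    fix q
    have "{U\<in>(\<Union>S\<in>K. crystal_pieces r l S). q \<in> U} = (\<Union>S\<in>K. {U\<in>crystal_pieces r l S. q \<in> U})"
      by auto
    then have "card {U\<in>(\<Union>S\<in>K. crystal_pieces r l S). q \<in> U}
        \<le> (\<Sum>S\<in>K. card {U\<in>crystal_pieces r l S. q \<in> U})"
      using card_UN_le[OF assms(2)] by simp
    also have "\<dots> \<le> (\<Sum>S\<in>K. 3 ^ (card S - 1) * fact (card S - 1))"
      using card_crystal_pieces_containing_le[OF simplex assms(3)] by (intro sum_mono) auto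
    finally show "card {U\<in>(\<Union>S\<in>K. crystal_pieces r l S). q \<in> U}
        \<le> (\<Sum>S\<in>K. 3 ^ (card S - 1) * fact (card S - 1))" .
  qed
qed

theorem lemma3p3:
  fixes K :: "'a::euclidean_space set set" and r :: "('a \<times> 'a) set"
  assumes "geom_simplicial_complex K" and "finite K" and "K \<noteq> {}"
    and "linear_order_on (\<Union>K) r"
  shows "\<exists>C::nat. \<forall>l::nat. \<exists>C'\<le>C. \<exists>c. is_coloring (crystalline r K l) c C'"
proof -
  define a where "a = Max (card ` K)"
  define b where "b = (\<Sum>S\<in>K. 3 ^ (card S - 1) * fact (card S - 1) :: nat)"
  have colorable: "\<exists>C'\<le>a ^ 3 * b ^ 3 * 2 ^ a. \<exists>c. is_coloring (crystalline r K l) c C'" for l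
  proof -
    interpret bounded_family "\<Union>S\<in>K. crystal_pieces r l S" a b
      unfolding a_def b_def using assms(1,2,4) by (rule bounded_family_crystal_pieces)
    obtain S where "S \<in> K"
      using assms(3) by auto
    then have "S \<noteq> {}"
      using assms(1) by (simp add: geom_simplicial_complex_def simplex_vs_def)
    then have "\<exists>U\<in>(\<Union>S\<in>K. crystal_pieces r l S). U \<noteq> {}"
      using crystal_pieces_nonempty[of S r l] \<open>S \<in> K\<close> by auto
    then show ?thesis
      unfolding crystalline_eq_face_closure by (rule face_closure_coloring)
  qed
  show ?thesis
    by (rule exI[of _ "a ^ 3 * b ^ 3 * 2 ^ a"], rule allI, rule colorable)
qed

end
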